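(* Fix $d\in\mathbf{N}$. The following statement (C1) is equivalent to statement (C2), and statement (C1') is equivalent to statement (C2'). (C1) For every $N\in\mathbf{N}$: if there exist an orthonormal basis $v_1,\dots,v_{d+1}$ of $\mathbf{R}^{d+1}$ and $x_1,\dots,x_N\in\mathbf{S}^d$ such that $\mu=\frac1N\sum_{i=1}^N\delta_{x_i}$ and $x_i\in\{v_j,-v_j\}$ whenever $i\equiv j \pmod{d+1}$, then $\mu$ maximizes $E_1$ over $\mathcal{P}_N^{=}(\mathbf{S}^d)$. (C2) For every $\alpha>1$ and every $N\in\mathbf{N}$: $\mu$ maximizes $E_\alpha$ over $\mathcal{P}_N^{=}(\mathbf{S}^d)$ if and only if there exist an orthonormal basis $v_1,\dots,v_{d+1}$ of $\mathbf{R}^{d+1}$ and $x_1,\dots,x_N\in\mathbf{S}^d$ such that $\mu=\frac1N\sum_{i=1}^N\delta_{x_i}$ and $x_i\in\{v_j,-v_j\}$ whenever $i\equiv j \pmod{d+1}$. (C1') If there exists an orthonormal basis $v_1,\dots,v_{d+1}$ of $\mathbf{R}^{d+1}$ such that $\mu=\sum_{i=1}^{d+1}(a_i\delta_{v_i}+b_i\delta_{-v_i})$ with $a_i,b_i\ge0$ and $a_i+b_i=\frac1{d+1}$ for all $i$, then $\mu$ maximizes $E_1$ over $\mathcal{P}_{\mathrm{fin}}(\mathbf{S}^d)$. (C2') For every $\alpha>1$: $\mu$ maximizes $E_\alpha$ over $\mathcal{P}_{\mathrm{fin}}(\mathbf{S}^d)$ if and only if there exists an orthonormal basis $v_1,\dots,v_{d+1}$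 of $\mathbf{R}^{d+1}$ such that $\mu=\sum_{i=1}^{d+1}(a_i\delta_{v_i}+b_i\delta_{-v_i})$ with $a_i,b_i\ge0$ and $a_i+b_i=\frac1{d+1}$ for all $i$.
   Context: $\mathbf{S}^d=\{x\in\mathbf{R}^{d+1}:|x|=1\}$, with geodesic distance $\rho(x,y)=\arccos(x\cdot y)$. Let $\Lambda_0(t)=\frac{2}{\pi}\min\{t,\pi-t\}$ for $t\in[0,\pi]$ and $\Lambda(x,y)=\Lambda_0(\rho(x,y))\in[0,1]$. For $\alpha\in[1,\infty)$ and a finite nonnegative Borel measure $\mu$ on $\mathbf{S}^d$, $E_\alpha(\mu)=\frac12\iint\Lambda(x,y)^\alpha\,d\mu(x)\,d\mu(y)$. $\delta_x$ is the Dirac probability measure at $x$. $\mathcal{P}_N^{=}(\mathbf{S}^d)$ is the set of probability measures $\frac1N\sum_{i=1}^N\delta_{x_i}$ with $x_i\in\mathbf{S}^d$ (not necessarily distinct); $\mathcal{P}_{\mathrm{fin}}(\mathbf{S}^d)$ is the set of Borel probability measures on $\mathbf{S}^d$ with finite support. *)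

theory Defs
  imports "HOL-Probability.Probability"
begin

definition Lambda0 :: "real \<Rightarrow> real" where
  "Lambda0 t = 2 / pi * min t (pi - t)"

definition Lambda :: "'a::real_inner \<Rightarrow> 'a \<Rightarrow> real" where
  "Lambda x y = Lambda0 (arccos (x \<bullet> y))"

text \<open>Finitely supported probability measures are represented as pmfs.
  E_alpha(mu) = 1/2 double integral of Lambda^alpha.\<close>
definition energy :: "real \<Rightarrow> 'a::real_inner pmf \<Rightarrow> real" where
  "energy \<alpha> \<mu> = 1/2 * (\<integral>x. (\<integral>y. Lambda x y powr \<alpha> \<partial>measure_pmf \<mu>) \<partial>measure_pmf \<mu>)"

definition P_eq :: "nat \<Rightarrow> 'a::real_normed_vector pmf set" where
  "P_eq N = {map_pmf x (pmf_of_set {1..N}) | x. \<forall>i\<in>{1..N}. x i \<in> sphere 0 1}"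

definition P_fin :: "'a::real_normed_vector pmf set" where
  "P_fin = {\<mu>. finite (set_pmf \<mu>) \<and> set_pmf \<mu> \<subseteq> sphere 0 1}"

definition maximizes :: "real \<Rightarrow> 'a::real_inner pmf set \<Rightarrow> 'a pmf \<Rightarrow> bool" where
  "maximizes \<alpha> S \<mu> \<longleftrightarrow> \<mu> \<in> S \<and> (\<forall>\<nu>\<in>S. energy \<alpha> \<nu> \<le> energy \<alpha> \<mu>)"

definition orthonormal_basis_seq :: "nat \<Rightarrow> (nat \<Rightarrow> 'a::euclidean_space) \<Rightarrow> bool" where
  "orthonormal_basis_seq n v \<longleftrightarrow>
     (\<forall>i\<in>{1..n}. \<forall>j\<in>{1..n}. v i \<bullet> v j = (if i = j then 1 else 0)) \<and> span (v ` {1..n}) = UNIV"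

text \<open>The configuration condition of (C1)/(C2), with d+1 = DIM('a).\<close>
definition cross_config :: "nat \<Rightarrow> 'a::euclidean_space pmf \<Rightarrow> bool" where
  "cross_config N \<mu> \<longleftrightarrow>
     (\<exists>v x. orthonormal_basis_seq DIM('a) v \<and> (\<forall>i\<in>{1..N}. x i \<in> sphere 0 1) \<and>
        \<mu> = map_pmf x (pmf_of_set {1..N}) \<and>
        (\<forall>i\<in>{1..N}. \<forall>j\<in>{1..DIM('a)}. i mod DIM('a) = j mod DIM('a) \<longrightarrow> x i \<in> {v j, - v j}))"

definition cross_weights :: "'a::euclidean_space pmf \<Rightarrow> bool" where
  "cross_weights \<mu> \<longleftrightarrow>
     (\<exists>v a b. orthonormal_basis_seq DIM('a) v \<and>
        (\<forall>i\<in>{1..DIM('a)}. a i \<ge> 0 \<and> b i \<ge> 0 \<and> a i + b i = 1 / real DIM('a)) \<and>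
        (\<forall>x. pmf \<mu> x = (\<Sum>i=1..DIM('a). a i * indicator {v i} x + b i * indicator {- v i} x)))"

end

theory Submission
  imports Defs
begin

(*
  On the sphere 0 <= Lambda <= 1, so E_alpha <= E_1 for alpha >= 1, and for alpha > 1
  equality holds exactly when Lambda takes only the values 0 and 1 on the support, i.e. when
  any two support points are equal, antipodal or orthogonal. Such a support lies in
  {v_1, -v_1, ..., v_(d+1), -v_(d+1)} for an orthonormal basis v, and then
  E_alpha(mu) = (1 - sum_j m_j^2) / 2 for every alpha > 0, where m_j is the mass of {v_j, -v_j}.

  The configurations in (C1) and (C1') are of this form with masses as equal as possible, so
  all of them have the same energy M for every alpha. If they maximise E_1, then
  E_alpha <= E_1 <= M everywhere, so they maximise E_alpha; and a maximiser of E_alpha has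
  E_alpha = E_1 = M, which forces the support structure and, by the equality case of
  sum_j m_j^2 >= (sum_j m_j)^2 / (d+1) (for P_N^= its integer version, whose minimisers take
  only the values q and q+1), masses as equal as possible. Conversely E_alpha -> E_1 as
  alpha -> 1, so maximising every E_alpha with alpha > 1 implies maximising E_1.
*)

section \<open>The kernel and the energy\<close>

definition orthogonal_up_to_sign :: "'a::real_inner set \<Rightarrow> bool" where
  "orthogonal_up_to_sign S \<longleftrightarrow> (\<forall>x\<in>S. \<forall>y\<in>S. y = x \<or> y = - x \<or> orthogonal x y)"

lemma sphere_inner_bounds:
  fixes x y :: "'a::real_inner"
  assumes "norm x = 1" "norm y = 1"
  shows "-1 \<le> x \<bullet> y" "x \<bullet> y \<le> 1"
  using Cauchy_Schwarz_ineq2[of x y] assms by auto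

lemma sphere_inner_eq_1_iff:
  fixes x y :: "'a::real_inner"
  assumes "norm x = 1" "norm y = 1"
  shows "x \<bullet> y = 1 \<longleftrightarrow> y = x"
proof -
  have "x \<bullet> x = 1" "y \<bullet> y = 1"
    using assms by (simp_all add: dot_square_norm)
  then have "(y - x) \<bullet> (y - x) = 2 - 2 * (x \<bullet> y)"
    by (simp add: inner_diff_left inner_diff_right inner_commute)
  then have "x \<bullet> y = 1 \<longleftrightarrow> (y - x) \<bullet> (y - x) = 0"
    by auto
  then show ?thesis
    by simp
qed

lemma Lambda_bounds:
  fixes x y :: "'a::real_inner"
  assumes "norm x = 1" "norm y = 1"
  shows "0 \<le> Lambda x y" "Lambda x y \<le> 1"
proof -
  have "0 \<le> arccos (x \<bullet> y)" "arccos (x \<bullet> y) \<le> pi"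
    using sphere_inner_bounds[OF assms] by (simp_all add: arccos_lbound arccos_ubound)
  then show "0 \<le> Lambda x y" "Lambda x y \<le> 1"
    by (auto simp: Lambda_def Lambda0_def min_def field_simps)
qed

lemma Lambda_powr_antimono:
  fixes x y :: "'a::real_inner"
  assumes "norm x = 1" "norm y = 1" "\<alpha> \<le> \<beta>"
  shows "Lambda x y powr \<beta> \<le> Lambda x y powr \<alpha>"
  using Lambda_bounds[OF assms(1,2)] assms(3) by (intro powr_mono') auto

lemma Lambda_eq_0_iff:
  fixes x y :: "'a::real_inner"
  assumes "norm x = 1" "norm y = 1"
  shows "Lambda x y = 0 \<longleftrightarrow> y = x \<or> y = - x"
proof -
  define t where "t = arccos (x \<bullet> y)"
  have t: "0 \<le> t" "t \<le> pi" "cos t = x \<bullet> y"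
    using sphere_inner_bounds[OF assms] by (simp_all add: t_def arccos_lbound arccos_ubound)
  have "Lambda x y = 0 \<longleftrightarrow> t = 0 \<or> t = pi"
    using t(1,2) by (auto simp: Lambda_def Lambda0_def t_def[symmetric] min_def)
  also have "\<dots> \<longleftrightarrow> x \<bullet> y = 1 \<or> x \<bullet> y = -1"
    using t(3) by (auto simp: t_def)
  also have "\<dots> \<longleftrightarrow> y = x \<or> y = - x"
    using sphere_inner_eq_1_iff[OF assms] sphere_inner_eq_1_iff[of x "- y"] assms
    by (auto simp: minus_equation_iff)
  finally show ?thesis .
qed

lemma Lambda_eq_1_iff:
  fixes x y :: "'a::real_inner"
  assumes "norm x = 1" "norm y = 1"
  shows "Lambda x y = 1 \<longleftrightarrow> orthogonal x y"
proof -
  define t where "t = arccos (x \<bullet> y)"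
  have t: "0 \<le> t" "t \<le> pi" "cos t = x \<bullet> y"
    using sphere_inner_bounds[OF assms] by (simp_all add: t_def arccos_lbound arccos_ubound)
  have "Lambda x y = 1 \<longleftrightarrow> t = pi / 2"
    using t(1,2) pi_gt_zero by (auto simp: Lambda_def Lambda0_def t_def[symmetric] min_def field_simps)
  also have "\<dots> \<longleftrightarrow> x \<bullet> y = 0"
    using t(3) by (metis arccos_0 cos_pi_half t_def)
  finally show ?thesis
    by (simp add: orthogonal_def)
qed

lemma Lambda_powr_orthogonal_up_to_sign:
  fixes S :: "'a::real_inner set"
  assumes "S \<subseteq> sphere 0 1" "orthogonal_up_to_sign S" "x \<in> S" "y \<in> S" "0 < \<alpha>"
  shows "Lambda x y powr \<alpha> = (if y \<in> {x, - x} then 0 else 1)"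
proof -
  have n: "norm x = 1" "norm y = 1"
    using assms(1,3,4) by auto
  have "y = x \<or> y = - x \<or> orthogonal x y"
    using assms(2-4) unfolding orthogonal_up_to_sign_def by blast
  then have "Lambda x y = (if y \<in> {x, - x} then 0 else 1)"
    using Lambda_eq_0_iff[OF n] Lambda_eq_1_iff[OF n] by auto
  then show ?thesis
    using assms(5) by simp
qed

lemma energy_eq_sum:
  fixes \<mu> :: "'a::real_inner pmf"
  assumes "finite A" "set_pmf \<mu> \<subseteq> A"
  shows "energy \<alpha> \<mu> = 1/2 * (\<Sum>x\<in>A. \<Sum>y\<in>A. pmf \<mu> x * pmf \<mu> y * Lambda x y powr \<alpha>)"
proof -
  have "(\<integral>y. f y \<partial>measure_pmf \<mu>) = (\<Sum>y\<in>A. pmf \<mu> y * f y)" for f :: "'a \<Rightarrow> real"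
    using integral_measure_pmf[OF assms(1), of \<mu> f] assms(2) by auto
  then show ?thesis
    by (simp add: energy_def sum_distrib_left mult.assoc)
qed

lemma energy_antimono:
  fixes \<mu> :: "'a::real_inner pmf"
  assumes "\<mu> \<in> P_fin" "\<alpha> \<le> \<beta>"
  shows "energy \<beta> \<mu> \<le> energy \<alpha> \<mu>"
proof -
  have fin: "finite (set_pmf \<mu>)" and sph: "set_pmf \<mu> \<subseteq> sphere 0 1"
    using assms(1) by (auto simp: P_fin_def)
  have "Lambda x y powr \<beta> \<le> Lambda x y powr \<alpha>" if "x \<in> set_pmf \<mu>" "y \<in> set_pmf \<mu>" for x y
    using that sph assms(2) by (intro Lambda_powr_antimono) auto
  then show ?thesis
    unfolding energy_eq_sum[OF fin order_refl] by (auto intro!: mult_left_mono sum_mono)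
qed

lemma orthogonal_up_to_sign_if_energy_eq:
  fixes \<mu> :: "'a::real_inner pmf"
  assumes "\<mu> \<in> P_fin" "\<alpha> < \<beta>" "energy \<beta> \<mu> = energy \<alpha> \<mu>"
  shows "orthogonal_up_to_sign (set_pmf \<mu>)"
proof -
  define S where "S = set_pmf \<mu>"
  have fin: "finite S" and sph: "S \<subseteq> sphere 0 1"
    using assms(1) by (auto simp: P_fin_def S_def)
  define gap where "gap x y = pmf \<mu> x * pmf \<mu> y * (Lambda x y powr \<alpha> - Lambda x y powr \<beta>)" for x y
  have gap_nonneg: "0 \<le> gap x y" if "(x, y) \<in> S \<times> S" for x y
  proof -
    have "Lambda x y powr \<beta> \<le> Lambda x y powr \<alpha>"
      using that sph assms(2) by (intro Lambda_powr_antimono) auto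
    then show ?thesis
      by (auto simp: gap_def intro!: mult_nonneg_nonneg)
  qed
  have "(\<Sum>(x, y)\<in>S \<times> S. gap x y) = 2 * energy \<alpha> \<mu> - 2 * energy \<beta> \<mu>"
    unfolding energy_eq_sum[OF fin[unfolded S_def] order_refl] S_def[symmetric]
    by (simp add: gap_def sum.cartesian_product[symmetric] right_diff_distrib sum_subtractf)
  then have "\<forall>p\<in>S \<times> S. case_prod gap p = 0"
    using assms(3) fin gap_nonneg by (subst sum_nonneg_eq_0_iff[symmetric]) auto
  then have gap0: "gap x y = 0" if "x \<in> S" "y \<in> S" for x y
    using that by auto
  show ?thesis
    unfolding orthogonal_up_to_sign_def S_def[symmetric]
  proof (intro ballI)
    fix x y assume xy: "x \<in> S" "y \<in> S"
    then have n: "norm x = 1" "norm y = 1"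
      using sph by auto
    have "pmf \<mu> x > 0" "pmf \<mu> y > 0"
      using xy by (auto simp: S_def pmf_positive)
    then have "Lambda x y powr \<beta> = Lambda x y powr \<alpha>"
      using gap0[OF xy] by (simp add: gap_def)
    then have "Lambda x y = 0 \<or> Lambda x y = 1"
      using Lambda_bounds[OF n] powr_less_mono'[of "Lambda x y" \<alpha> \<beta>] assms(2) by fastforce
    then show "y = x \<or> y = - x \<or> orthogonal x y"
      using Lambda_eq_0_iff[OF n] Lambda_eq_1_iff[OF n] by blast
  qed
qed

lemma tendsto_energy:
  fixes \<mu> :: "'a::real_inner pmf"
  assumes "\<mu> \<in> P_fin"
  shows "((\<lambda>\<alpha>. energy \<alpha> \<mu>) \<longlongrightarrow> energy \<alpha>\<^sub>0 \<mu>) (at \<alpha>\<^sub>0)"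
proof -
  have fin: "finite (set_pmf \<mu>)"
    using assms by (simp add: P_fin_def)
  have powr: "((\<lambda>\<alpha>. l powr \<alpha>) \<longlongrightarrow> l powr \<alpha>\<^sub>0) (at \<alpha>\<^sub>0)" for l :: real
    by (cases "l = 0") (auto intro!: tendsto_intros)
  show ?thesis
    unfolding energy_eq_sum[OF fin order_refl] by (intro tendsto_intros powr)
qed

lemma energy_le_if_right_bound:
  fixes \<mu> :: "'a::real_inner pmf"
  assumes "\<mu> \<in> P_fin" "\<And>\<alpha>. \<alpha>\<^sub>0 < \<alpha> \<Longrightarrow> energy \<alpha> \<mu> \<le> c"
  shows "energy \<alpha>\<^sub>0 \<mu> \<le> c"
proof (rule tendsto_upperbound)
  show "((\<lambda>\<alpha>. energy \<alpha> \<mu>) \<longlongrightarrow> energy \<alpha>\<^sub>0 \<mu>) (at_right \<alpha>\<^sub>0)"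
    using tendsto_energy[OF assms(1)] by (rule tendsto_mono[OF at_le, rotated]) simp
  show "\<forall>\<^sub>F \<alpha> in at_right \<alpha>\<^sub>0. energy \<alpha> \<mu> \<le> c"
    using assms(2) by (intro eventually_at_rightI[where b = "\<alpha>\<^sub>0 + 1"]) auto
qed simp

context
  fixes S :: "'a::real_inner pmf set" and C :: "'a pmf \<Rightarrow> bool" and M :: real
  assumes S_subset: "S \<subseteq> P_fin"
    and C_nonempty: "\<exists>\<mu>. C \<mu>"
    and C_mem: "\<And>\<mu>. C \<mu> \<Longrightarrow> \<mu> \<in> S"
    and C_energy: "\<And>\<mu> \<alpha>. C \<mu> \<Longrightarrow> 1 \<le> \<alpha> \<Longrightarrow> energy \<alpha> \<mu> = M"
    and C_if_energy: "\<And>\<mu>. \<mu> \<in> S \<Longrightarrow> orthogonal_up_to_sign (set_pmf \<mu>) \<Longrightarrow> energy 1 \<mu> = M \<Longrightarrow> C \<mu>"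
begin

lemma maximizes_gt_1_iff_if_maximizes_1:
  assumes max_1: "\<forall>\<mu>. C \<mu> \<longrightarrow> maximizes 1 S \<mu>" and "1 < \<alpha>"
  shows "maximizes \<alpha> S \<mu> \<longleftrightarrow> C \<mu>"
proof -
  obtain \<mu>\<^sub>0 where "C \<mu>\<^sub>0"
    using C_nonempty by blast
  then have le_M: "energy 1 \<nu> \<le> M" if "\<nu> \<in> S" for \<nu>
    using max_1 that C_energy[of \<mu>\<^sub>0 1] by (auto simp: maximizes_def)
  have le_1: "energy \<alpha> \<nu> \<le> energy 1 \<nu>" if "\<nu> \<in> S" for \<nu>
    using energy_antimono[of \<nu> 1 \<alpha>] S_subset that \<open>1 < \<alpha>\<close> by auto
  show ?thesis
  proof
    assume "C \<mu>"
    then have "energy \<alpha> \<nu> \<le> energy \<alpha> \<mu>" if "\<nu> \<in> S" for \<nu>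
      using le_1[OF that] le_M[OF that] C_energy[of \<mu> \<alpha>] \<open>1 < \<alpha>\<close> by simp
    then show "maximizes \<alpha> S \<mu>"
      using C_mem[OF \<open>C \<mu>\<close>] by (simp add: maximizes_def)
  next
    assume "maximizes \<alpha> S \<mu>"
    then have "\<mu> \<in> S" and "M \<le> energy \<alpha> \<mu>"
      using C_mem[OF \<open>C \<mu>\<^sub>0\<close>] C_energy[OF \<open>C \<mu>\<^sub>0\<close>, of \<alpha>] \<open>1 < \<alpha>\<close>
      by (auto simp: maximizes_def)
    then have "energy \<alpha> \<mu> = energy 1 \<mu>" and "energy 1 \<mu> = M"
      using le_1[OF \<open>\<mu> \<in> S\<close>] le_M[OF \<open>\<mu> \<in> S\<close>] by linarith+
    then show "C \<mu>"
      using C_if_energy \<open>\<mu> \<in> S\<close> S_subset orthogonal_up_to_sign_if_energy_eq[of \<mu> 1 \<alpha>] \<open>1 < \<alpha>\<close>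
      by auto
  qed
qed

lemma maximizes_1_if_maximizes_gt_1:
  assumes max_gt_1: "\<forall>\<alpha>>1. \<forall>\<mu>. maximizes \<alpha> S \<mu> \<longleftrightarrow> C \<mu>" and "C \<mu>"
  shows "maximizes 1 S \<mu>"
proof -
  have "energy 1 \<nu> \<le> M" if "\<nu> \<in> S" for \<nu>
  proof (rule energy_le_if_right_bound)
    show "\<nu> \<in> P_fin"
      using S_subset that by blast
    fix \<alpha> :: real assume "1 < \<alpha>"
    then have "energy \<alpha> \<nu> \<le> energy \<alpha> \<mu>"
      using max_gt_1 \<open>C \<mu>\<close> that by (auto simp: maximizes_def)
    then show "energy \<alpha> \<nu> \<le> M"
      using C_energy[OF \<open>C \<mu>\<close>] \<open>1 < \<alpha>\<close> by simp
  qed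
  then show ?thesis
    using C_mem[OF \<open>C \<mu>\<close>] C_energy[OF \<open>C \<mu>\<close>, of 1] by (simp add: maximizes_def)
qed

lemma maximizes_1_iff_maximizes_gt_1:
  "(\<forall>\<mu>. C \<mu> \<longrightarrow> maximizes 1 S \<mu>) \<longleftrightarrow> (\<forall>\<alpha>>1. \<forall>\<mu>. maximizes \<alpha> S \<mu> \<longleftrightarrow> C \<mu>)"
  using maximizes_gt_1_iff_if_maximizes_1 maximizes_1_if_maximizes_gt_1 by blast

end

section \<open>Orthonormal bases up to sign\<close>

definition orthonormal :: "'a::real_inner set \<Rightarrow> bool" where
  "orthonormal B \<longleftrightarrow> pairwise orthogonal B \<and> (\<forall>b\<in>B. norm b = 1)"

lemma minus_eq_self_iff: "- x = x \<longleftrightarrow> x = (0 :: 'a::real_vector)"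
proof
  assume "- x = x"
  then have "2 *\<^sub>R x = 0"
    by (metis add.left_inverse scaleR_2)
  then show "x = 0"
    by simp
qed simp

lemma orthonormal_finite: "orthonormal B \<Longrightarrow> finite (B :: 'a::euclidean_space set)"
  by (simp add: orthonormal_def pairwise_orthogonal_imp_finite)

lemma orthonormal_inner:
  assumes "orthonormal B" "b \<in> B" "c \<in> B"
  shows "b \<bullet> c = (if b = c then 1 else 0)"
  using assms by (auto simp: orthonormal_def pairwise_def orthogonal_def dot_square_norm)

lemma orthonormal_uminus_notin:
  assumes "orthonormal B" "b \<in> B"
  shows "- b \<notin> B"
proof
  assume "- b \<in> B"
  then have "b \<bullet> - b = (if b = - b then 1 else 0)"
    by (rule orthonormal_inner[OF assms])
  moreover have "b \<bullet> - b = -1"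
    using orthonormal_inner[OF assms assms(2)] by simp
  ultimately show False
    by (simp split: if_splits)
qed

lemma orthonormal_signed_subset_sphere:
  "orthonormal B \<Longrightarrow> B \<union> uminus ` B \<subseteq> sphere 0 1"
  by (auto simp: orthonormal_def)

lemma orthogonal_up_to_sign_signed:
  assumes "orthonormal B"
  shows "orthogonal_up_to_sign (B \<union> uminus ` B)"
  unfolding orthogonal_up_to_sign_def
proof (intro ballI)
  fix x y assume "x \<in> B \<union> uminus ` B" "y \<in> B \<union> uminus ` B"
  then obtain b c where "b \<in> B" "c \<in> B" "x = b \<or> x = - b" "y = c \<or> y = - c"
    by blast
  then show "y = x \<or> y = - x \<or> orthogonal x y"
    using assms by (cases "b = c") (auto simp: orthonormal_def pairwise_def orthogonal_def)
qed

lemma sum_Un_uminus_image: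
  fixes B :: "'a::euclidean_space set"
  assumes "orthonormal B"
  shows "(\<Sum>x\<in>B \<union> uminus ` B. h x) = (\<Sum>b\<in>B. h b + h (- b))"
proof -
  have "B \<inter> uminus ` B = {}"
    using orthonormal_uminus_notin[OF assms] by force
  then have "(\<Sum>x\<in>B \<union> uminus ` B. h x) = (\<Sum>b\<in>B. h b) + (\<Sum>x\<in>uminus ` B. h x)"
    using orthonormal_finite[OF assms] by (simp add: sum.union_disjoint)
  also have "(\<Sum>x\<in>uminus ` B. h x) = (\<Sum>b\<in>B. h (- b))"
    by (simp add: sum.reindex)
  finally show ?thesis
    by (simp add: sum.distrib)
qed

lemma orthonormal_representatives:
  fixes S :: "'a::real_inner set"
  assumes "S \<subseteq> sphere 0 1" "orthogonal_up_to_sign S"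
  obtains R where "orthonormal R" "S \<subseteq> R \<union> uminus ` R"
proof
  \<comment> \<open>The choice is made on the set {x, -x}, so x and -x get the same representative.\<close>
  define rep where "rep x = (SOME y. y \<in> {x, - x})" for x :: 'a
  have rep: "rep x = x \<or> rep x = - x" for x
    using someI[of "\<lambda>y. y \<in> {x, - x}" x] by (simp add: rep_def)
  have rep_uminus: "rep (- x) = rep x" for x
    by (simp add: rep_def insert_commute)
  show "S \<subseteq> rep ` S \<union> uminus ` rep ` S"
  proof
    fix x assume "x \<in> S"
    then show "x \<in> rep ` S \<union> uminus ` rep ` S"
      using rep[of x] by (metis UnI1 UnI2 image_eqI minus_minus)
  qed
  show "orthonormal (rep ` S)"
    unfolding orthonormal_def pairwise_def
  proof (intro conjI ballI impI)
    fix x assume "x \<in> rep ` S"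
    then obtain y where "y \<in> S" "x = rep y"
      by blast
    then show "norm x = 1"
      using assms(1) rep[of y] by auto
  next
    fix x' y' assume "x' \<in> rep ` S" "y' \<in> rep ` S" "x' \<noteq> y'"
    then obtain x y where xy: "x \<in> S" "y \<in> S" "x' = rep x" "y' = rep y" "rep x \<noteq> rep y"
      by auto
    then have "orthogonal x y"
      using assms(2) rep_uminus unfolding orthogonal_up_to_sign_def by metis
    then show "orthogonal x' y'"
      using rep[of x] rep[of y] xy(3,4) by (auto simp: orthogonal_clauses)
  qed
qed

lemma orthonormal_sgn_image:
  fixes S :: "'a::real_inner set"
  assumes "pairwise orthogonal S" "0 \<notin> S"
  shows "orthonormal (sgn ` S)" and "span (sgn ` S) = span S"
proof -
  show "orthonormal (sgn ` S)"
    unfolding orthonormal_def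
  proof
    show "\<forall>b\<in>sgn ` S. norm b = 1"
      using assms(2) by (auto simp: norm_sgn)
    show "pairwise orthogonal (sgn ` S)"
    proof (rule pairwiseI)
      fix x y assume "x \<in> sgn ` S" "y \<in> sgn ` S" "x \<noteq> y"
      then obtain x' y' where "x' \<in> S" "y' \<in> S" "x' \<noteq> y'" "x = sgn x'" "y = sgn y'"
        by auto
      with assms(1) show "orthogonal x y"
        by (auto simp: pairwise_def orthogonal_def sgn_div_norm)
    qed
  qed
  have "u = norm u *\<^sub>R sgn u" "sgn u = inverse (norm u) *\<^sub>R u" if "u \<in> S" for u
  proof -
    have "u \<noteq> 0"
      using assms(2) that by blast
    then show "u = norm u *\<^sub>R sgn u" "sgn u = inverse (norm u) *\<^sub>R u"
      by (simp_all add: sgn_div_norm)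
  qed
  then have "S \<subseteq> span (sgn ` S)" "sgn ` S \<subseteq> span S"
    by (metis image_eqI span_base span_scale subsetI image_subset_iff)+
  then show "span (sgn ` S) = span S"
    by (simp add: span_eq)
qed

lemma orthonormal_extend:
  fixes R :: "'a::euclidean_space set"
  assumes "orthonormal R"
  obtains B where "orthonormal B" "R \<subseteq> B" "span B = UNIV"
proof -
  obtain U where U0: "U \<inter> insert 0 R = {}" and orth: "pairwise orthogonal (R \<union> U)"
    and span_RU: "span (R \<union> U) = span (R \<union> UNIV)"
    using orthogonal_extension_strong assms unfolding orthonormal_def by blast
  have nonzero: "0 \<notin> R \<union> U"
    using assms U0 by (auto simp: orthonormal_def)
  have "R \<subseteq> sgn ` (R \<union> U)"
    using assms by (force simp: orthonormal_def sgn_div_norm)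
  moreover have "span (sgn ` (R \<union> U)) = UNIV"
    using orthonormal_sgn_image(2)[OF orth nonzero] span_RU by simp
  ultimately show thesis
    using that orthonormal_sgn_image(1)[OF orth nonzero] by blast
qed

lemma orthonormal_card_eq_DIM:
  fixes B :: "'a::euclidean_space set"
  assumes "orthonormal B" "span B = UNIV"
  shows "card B = DIM('a)"
proof -
  have "independent B"
    using assms(1) by (intro pairwise_orthogonal_independent) (auto simp: orthonormal_def)
  then show ?thesis
    using dim_span_eq_card_independent[of B] assms(2) dim_UNIV by simp
qed

lemma signed_basis_if_orthogonal_up_to_sign:
  fixes S :: "'a::euclidean_space set"
  assumes "S \<subseteq> sphere 0 1" "orthogonal_up_to_sign S"
  obtains B where "orthonormal B" "span B = UNIV" "S \<subseteq> B \<union> uminus ` B"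
proof -
  obtain R where R: "orthonormal R" "S \<subseteq> R \<union> uminus ` R"
    using orthonormal_representatives[OF assms] .
  obtain B where "orthonormal B" "R \<subseteq> B" "span B = UNIV"
    using orthonormal_extend[OF R(1)] .
  with R(2) show thesis
    using that by blast
qed

lemma orthonormal_Basis: "orthonormal (Basis :: 'a::euclidean_space set)"
  by (auto simp: orthonormal_def pairwise_def orthogonal_def inner_not_same_Basis)

lemma orthonormal_basis_seq_iff:
  "orthonormal_basis_seq n v \<longleftrightarrow>
     inj_on v {1..n} \<and> orthonormal (v ` {1..n}) \<and> span (v ` {1..n}) = UNIV"
proof
  assume v: "orthonormal_basis_seq n v"
  then have inner: "v i \<bullet> v j = (if i = j then 1 else 0)" if "i \<in> {1..n}" "j \<in> {1..n}" for i j
    using that by (simp add: orthonormal_basis_seq_def)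
  have "inj_on v {1..n}"
    by (rule inj_onI) (metis inner one_neq_zero)
  moreover have "orthonormal (v ` {1..n})"
    using inner by (auto simp: orthonormal_def pairwise_def orthogonal_def norm_eq_sqrt_inner)
  ultimately show "inj_on v {1..n} \<and> orthonormal (v ` {1..n}) \<and> span (v ` {1..n}) = UNIV"
    using v by (simp add: orthonormal_basis_seq_def)
next
  assume "inj_on v {1..n} \<and> orthonormal (v ` {1..n}) \<and> span (v ` {1..n}) = UNIV"
  then show "orthonormal_basis_seq n v"
    by (auto simp: orthonormal_basis_seq_def orthonormal_inner inj_on_eq_iff)
qed

lemma orthonormal_basis_seqI:
  assumes "orthonormal B" "span B = UNIV" "bij_betw v {1..n} B"
  shows "orthonormal_basis_seq n v"
  using assms by (auto simp: orthonormal_basis_seq_iff bij_betw_def)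

lemma ex_orthonormal_basis_seq:
  fixes B :: "'a::euclidean_space set"
  assumes "orthonormal B" "span B = UNIV"
  obtains v where "orthonormal_basis_seq DIM('a) v" "v ` {1..DIM('a)} = B"
proof -
  obtain v where "bij_betw v {1..card B} B"
    using ex_bij_betw_nat_finite_1 orthonormal_finite[OF assms(1)] by blast
  then show thesis
    using that orthonormal_basis_seqI[OF assms] orthonormal_card_eq_DIM[OF assms]
    by (auto simp: bij_betw_def)
qed

lemma orthonormal_basis_seq_axis_eq:
  assumes "orthonormal_basis_seq n v" "i \<in> {1..n}" "j \<in> {1..n}" "v i \<in> {v j, - v j}"
  shows "i = j"
proof -
  have inj: "inj_on v {1..n}" and on: "orthonormal (v ` {1..n})"
    using assms(1) by (simp_all add: orthonormal_basis_seq_iff)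
  have "- v j \<notin> v ` {1..n}"
    using orthonormal_uminus_notin[OF on] assms(3) by blast
  moreover have "v i \<in> v ` {1..n}"
    using assms(2) by blast
  ultimately have "v i = v j"
    using assms(4) by auto
  then show ?thesis
    using inj assms(2,3) by (auto dest: inj_onD)
qed

definition axis_mass :: "'a::real_vector pmf \<Rightarrow> 'a \<Rightarrow> real" where
  "axis_mass \<mu> b = pmf \<mu> b + pmf \<mu> (- b)"

lemma sum_axis_mass:
  fixes \<mu> :: "'a::euclidean_space pmf"
  assumes "orthonormal B" "set_pmf \<mu> \<subseteq> B \<union> uminus ` B"
  shows "(\<Sum>b\<in>B. axis_mass \<mu> b) = 1"
proof -
  have "(\<Sum>b\<in>B. axis_mass \<mu> b) = (\<Sum>x\<in>B \<union> uminus ` B. pmf \<mu> x)"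
    unfolding sum_Un_uminus_image[OF assms(1)] axis_mass_def ..
  also have "\<dots> = 1"
    using assms(2) orthonormal_finite[OF assms(1)] by (simp add: sum_pmf_eq_1)
  finally show ?thesis .
qed

lemma energy_signed_basis:
  fixes \<mu> :: "'a::euclidean_space pmf"
  assumes B: "orthonormal B" and supp: "set_pmf \<mu> \<subseteq> B \<union> uminus ` B" and "0 < \<alpha>"
  shows "energy \<alpha> \<mu> = 1/2 * (1 - (\<Sum>b\<in>B. (axis_mass \<mu> b)\<^sup>2))"
proof -
  define T where "T = B \<union> uminus ` B"
  have fin: "finite T"
    using orthonormal_finite[OF B] by (simp add: T_def)
  have sph: "T \<subseteq> sphere 0 1"
    using orthonormal_signed_subset_sphere[OF B] by (simp add: T_def)
  have total: "(\<Sum>y\<in>T. pmf \<mu> y) = 1"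
    using fin supp by (simp add: T_def sum_pmf_eq_1)
  have kernel: "Lambda x y powr \<alpha> = (if y \<in> {x, - x} then 0 else 1)" if "x \<in> T" "y \<in> T" for x y
    using Lambda_powr_orthogonal_up_to_sign[OF sph _ that \<open>0 < \<alpha>\<close>] orthogonal_up_to_sign_signed[OF B]
    by (simp add: T_def)
  have inner: "(\<Sum>y\<in>T. pmf \<mu> y * Lambda x y powr \<alpha>) = 1 - axis_mass \<mu> x" if "x \<in> T" for x
  proof -
    have "x \<noteq> 0"
      using that sph by auto
    then have "x \<noteq> - x"
      by (metis minus_eq_self_iff)
    have "- x \<in> T"
      using that by (auto simp: T_def)
    have "(\<Sum>y\<in>T. pmf \<mu> y * Lambda x y powr \<alpha>) = (\<Sum>y\<in>T. pmf \<mu> y - (if y \<in> {x, - x} then pmf \<mu> y else 0))"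
      using kernel[OF that] by (intro sum.cong) simp_all
    also have "\<dots> = (\<Sum>y\<in>T. pmf \<mu> y) - (\<Sum>y\<in>T \<inter> {x, - x}. pmf \<mu> y)"
      by (simp only: sum_subtractf sum.inter_restrict[OF fin])
    also have "T \<inter> {x, - x} = {x, - x}"
      using that \<open>- x \<in> T\<close> by blast
    finally show ?thesis
      using \<open>x \<noteq> - x\<close> total by (simp add: axis_mass_def)
  qed
  have "energy \<alpha> \<mu> = 1/2 * (\<Sum>x\<in>T. pmf \<mu> x * (\<Sum>y\<in>T. pmf \<mu> y * Lambda x y powr \<alpha>))"
    using energy_eq_sum[OF fin, of \<mu> \<alpha>] supp by (simp add: T_def mult.assoc sum_distrib_left)
  also have "\<dots> = 1/2 * (\<Sum>x\<in>T. pmf \<mu> x - pmf \<mu> x * axis_mass \<mu> x)"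
    using inner by (simp add: right_diff_distrib)
  also have "\<dots> = 1/2 * (1 - (\<Sum>x\<in>T. pmf \<mu> x * axis_mass \<mu> x))"
    by (simp only: sum_subtractf total)
  also have "(\<Sum>x\<in>T. pmf \<mu> x * axis_mass \<mu> x) = (\<Sum>b\<in>B. (axis_mass \<mu> b)\<^sup>2)"
    unfolding T_def sum_Un_uminus_image[OF B] power2_eq_square
    by (simp add: axis_mass_def distrib_right add.commute)
  finally show ?thesis .
qed

section \<open>Sums of squares and rearrangements\<close>

lemma sum_power2_eq_iff_constant:
  fixes f :: "'b \<Rightarrow> real"
  assumes "finite A" "A \<noteq> {}"
  shows "(\<Sum>a\<in>A. (f a)\<^sup>2) = (sum f A)\<^sup>2 / card A \<longleftrightarrow> (\<forall>a\<in>A. f a = sum f A / card A)"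
proof -
  define c where "c = sum f A / card A"
  have card: "real (card A) > 0"
    using assms by (simp add: card_gt_0_iff)
  have "(\<Sum>a\<in>A. (f a - c)\<^sup>2) = (\<Sum>a\<in>A. (f a)\<^sup>2 - 2 * c * f a + c\<^sup>2)"
    by (intro sum.cong) (simp_all add: power2_eq_square algebra_simps)
  also have "\<dots> = (\<Sum>a\<in>A. (f a)\<^sup>2) - 2 * c * sum f A + card A * c\<^sup>2"
    by (simp add: sum.distrib sum_subtractf sum_distrib_left)
  also have "\<dots> = (\<Sum>a\<in>A. (f a)\<^sup>2) - (sum f A)\<^sup>2 / card A"
    using card by (simp add: c_def power2_eq_square field_simps)
  finally have "(\<Sum>a\<in>A. (f a)\<^sup>2) = (sum f A)\<^sup>2 / card A \<longleftrightarrow> (\<Sum>a\<in>A. (f a - c)\<^sup>2) = 0"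
    by linarith
  also have "\<dots> \<longleftrightarrow> (\<forall>a\<in>A. f a = c)"
    using assms(1) by (simp add: sum_nonneg_eq_0_iff)
  finally show ?thesis
    by (simp add: c_def)
qed

lemma sum_power2_eq_iff_two_valued:
  fixes f :: "'b \<Rightarrow> int" and q :: int
  assumes "finite A"
  shows "(\<Sum>a\<in>A. (f a)\<^sup>2) = (2 * q + 1) * sum f A - int (card A) * q * (q + 1)
    \<longleftrightarrow> (\<forall>a\<in>A. f a = q \<or> f a = q + 1)"
proof -
  have consecutive_nonneg: "0 \<le> (k - q) * (k - q - 1)" for k :: int
    by (cases "k \<le> q") (auto intro: mult_nonpos_nonpos mult_nonneg_nonneg)
  have "(\<Sum>a\<in>A. (f a - q) * (f a - q - 1)) = (\<Sum>a\<in>A. (f a)\<^sup>2 - (2 * q + 1) * f a + q * (q + 1))"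
    by (intro sum.cong) (simp_all add: power2_eq_square algebra_simps)
  also have "\<dots> = (\<Sum>a\<in>A. (f a)\<^sup>2) - (2 * q + 1) * sum f A + int (card A) * q * (q + 1)"
    by (simp add: sum.distrib sum_subtractf sum_distrib_left)
  finally have "(\<Sum>a\<in>A. (f a)\<^sup>2) = (2 * q + 1) * sum f A - int (card A) * q * (q + 1)
      \<longleftrightarrow> (\<Sum>a\<in>A. (f a - q) * (f a - q - 1)) = 0"
    by linarith
  also have "\<dots> \<longleftrightarrow> (\<forall>a\<in>A. (f a - q) * (f a - q - 1) = 0)"
    using assms consecutive_nonneg by (simp add: sum_nonneg_eq_0_iff)
  also have "\<dots> \<longleftrightarrow> (\<forall>a\<in>A. f a = q \<or> f a = q + 1)"
    by auto
  finally show ?thesis .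
qed

lemma two_valued_if_sum_power2_eq:
  fixes f :: "'b \<Rightarrow> nat" and g :: "'c \<Rightarrow> nat"
  assumes "finite A" "finite B" "card A = card B" "sum f A = sum g B"
    and "(\<Sum>a\<in>A. (f a)\<^sup>2) = (\<Sum>b\<in>B. (g b)\<^sup>2)"
    and "\<forall>b\<in>B. g b = q \<or> g b = q + 1"
  shows "\<forall>a\<in>A. f a = q \<or> f a = q + 1"
proof -
  have "(\<Sum>b\<in>B. (int (g b))\<^sup>2) = (2 * int q + 1) * (\<Sum>b\<in>B. int (g b)) - int (card B) * int q * (int q + 1)"
    using sum_power2_eq_iff_two_valued[OF assms(2), of "\<lambda>b. int (g b)" "int q"] assms(6) by auto
  then have "(\<Sum>a\<in>A. (int (f a))\<^sup>2) = (2 * int q + 1) * (\<Sum>a\<in>A. int (f a)) - int (card A) * int q * (int q + 1)"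
    using assms(3-5) by (simp only: of_nat_power[symmetric] of_nat_sum[symmetric])
  then show ?thesis
    using sum_power2_eq_iff_two_valued[OF assms(1), of "\<lambda>a. int (f a)" "int q"] by auto
qed

lemma sum_two_valued:
  fixes f :: "'b \<Rightarrow> nat"
  assumes "finite A" "\<forall>a\<in>A. f a = q \<or> f a = q + 1"
  shows "sum f A = card A * q + card {a\<in>A. f a = q + 1}"
proof -
  have "sum f A = (\<Sum>a\<in>A. q + (if f a = q + 1 then 1 else 0))"
  proof (rule sum.cong[OF refl])
    fix a assume "a \<in> A"
    then have "f a = q \<or> f a = q + 1"
      using assms(2) by blast
    then show "f a = q + (if f a = q + 1 then 1 else 0)"
      by auto
  qed
  also have "\<dots> = card A * q + (\<Sum>a\<in>A. if f a = q + 1 then 1 else 0)"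
    by (simp only: sum.distrib sum_constant of_nat_id)
  also have "(\<Sum>a\<in>A. if f a = q + 1 then 1 else 0) = card {a\<in>A. f a = q + 1}"
    using sum.inter_filter[OF assms(1), of "\<lambda>_. 1::nat" "\<lambda>a. f a = q + 1"] by simp
  finally show ?thesis .
qed

lemma ex_bij_betw_fibers:
  assumes "finite A" "finite B" "\<And>k. card {a\<in>A. f a = k} = card {b\<in>B. g b = k}"
  obtains h where "bij_betw h A B" "\<And>a. a \<in> A \<Longrightarrow> g (h a) = f a"
proof -
  have "\<exists>h. bij_betw h {a\<in>A. f a = k} {b\<in>B. g b = k}" for k
    using assms by (intro finite_same_card_bij) auto
  then obtain h where h: "\<And>k. bij_betw (h k) {a\<in>A. f a = k} {b\<in>B. g b = k}"
    by metis
  have maps: "h (f a) a \<in> B" "g (h (f a) a) = f a" if "a \<in> A" for a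
    using bij_betwE[OF h[of "f a"]] that by auto
  have "bij_betw (\<lambda>a. h (f a) a) A B"
  proof (rule bij_betwI')
    fix a a' assume a: "a \<in> A" "a' \<in> A"
    show "h (f a) a = h (f a') a' \<longleftrightarrow> a = a'"
    proof
      assume eq: "h (f a) a = h (f a') a'"
      then have "f a = f a'"
        using maps(2)[OF a(1)] maps(2)[OF a(2)] by simp
      then show "a = a'"
        using eq a inj_onD[OF bij_betw_imp_inj_on[OF h[of "f a"]]] by auto
    qed simp
  next
    fix a assume "a \<in> A"
    then show "h (f a) a \<in> B"
      by (rule maps(1))
  next
    fix b assume "b \<in> B"
    then have "b \<in> h (g b) ` {a\<in>A. f a = g b}"
      using h[of "g b"] by (simp add: bij_betw_def)
    then obtain a where "a \<in> A" "f a = g b" "b = h (g b) a"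
      by auto
    then show "\<exists>a\<in>A. b = h (f a) a"
      by (intro bexI[of _ a]) simp_all
  qed
  then show thesis
    using that maps(2) by blast
qed

lemma ex_bij_betw_two_valued:
  fixes f :: "'b \<Rightarrow> nat" and g :: "'c \<Rightarrow> nat"
  assumes "finite A" "finite B" "card A = card B" "sum f A = sum g B"
    and "\<forall>a\<in>A. f a = q \<or> f a = q + 1" "\<forall>b\<in>B. g b = q \<or> g b = q + 1"
  obtains h where "bij_betw h A B" "\<And>a. a \<in> A \<Longrightarrow> g (h a) = f a"
proof -
  have upper: "card {a\<in>A. f a = q + 1} = card {b\<in>B. g b = q + 1}"
    using sum_two_valued[OF assms(1,5)] sum_two_valued[OF assms(2,6)] assms(3,4) by simp
  have "{a\<in>A. f a = q} = A - {a\<in>A. f a = q + 1}" "{b\<in>B. g b = q} = B - {b\<in>B. g b = q + 1}"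
    using assms(5,6) by auto
  then have lower: "card {a\<in>A. f a = q} = card {b\<in>B. g b = q}"
    using upper assms(1-3) by (simp add: card_Diff_subset)
  have "card {a\<in>A. f a = k} = card {b\<in>B. g b = k}" for k
  proof (cases "k = q \<or> k = q + 1")
    case False
    then have "{a\<in>A. f a = k} = {}" "{b\<in>B. g b = k} = {}"
      using assms(5,6) by auto
    then show ?thesis
      by (metis card.empty)
  next
    case True
    then show ?thesis
      using upper lower by (elim disjE) simp_all
  qed
  then show thesis
    using ex_bij_betw_fibers[OF assms(1,2)] that by blast
qed

section \<open>Weighted cross-polytopes\<close>

lemma sum_signed_basis_indicator:
  assumes v: "orthonormal_basis_seq n v" and k: "k \<in> {1..n}"
  shows "(\<Sum>i=1..n. a i * indicator {v i} (v k) + b i * indicator {- v i} (v k)) = a k"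
    and "(\<Sum>i=1..n. a i * indicator {v i} (- v k) + b i * indicator {- v i} (- v k)) = (b k :: real)"
proof -
  have inj: "inj_on v {1..n}" and on: "orthonormal (v ` {1..n})"
    using v by (simp_all add: orthonormal_basis_seq_iff)
  have same: "v k = v i \<longleftrightarrow> i = k" if "i \<in> {1..n}" for i
    using inj that k by (auto dest: inj_onD)
  have opposite: "v i \<noteq> - v j" "- v j \<noteq> v i" if "i \<in> {1..n}" "j \<in> {1..n}" for i j
    using orthonormal_uminus_notin[OF on] that by (metis image_eqI minus_minus)+
  have "(\<Sum>i=1..n. a i * indicator {v i} (v k) + b i * indicator {- v i} (v k))
      = (\<Sum>i=1..n. if i = k then a i else 0)"
    using same opposite k by (intro sum.cong) (auto simp: indicator_def)
  then show "(\<Sum>i=1..n. a i * indicator {v i} (v k) + b i * indicator {- v i} (v k)) = a k"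
    using k by simp
  have "(\<Sum>i=1..n. a i * indicator {v i} (- v k) + b i * indicator {- v i} (- v k))
      = (\<Sum>i=1..n. if i = k then b i else 0)"
    using same opposite k by (intro sum.cong) (auto simp: indicator_def)
  then show "(\<Sum>i=1..n. a i * indicator {v i} (- v k) + b i * indicator {- v i} (- v k)) = b k"
    using k by simp
qed

lemma pmf_eq_sum_signed_basis:
  assumes v: "orthonormal_basis_seq n v"
    and supp: "set_pmf \<mu> \<subseteq> v ` {1..n} \<union> uminus ` v ` {1..n}"
  shows "pmf \<mu> x = (\<Sum>i=1..n. pmf \<mu> (v i) * indicator {v i} x + pmf \<mu> (- v i) * indicator {- v i} x)"
proof (cases "x \<in> v ` {1..n} \<union> uminus ` v ` {1..n}")
  case True
  then obtain k where "k \<in> {1..n}" "x = v k \<or> x = - v k"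
    by blast
  then show ?thesis
    using sum_signed_basis_indicator[OF v] by auto
next
  case False
  then have "pmf \<mu> x = 0"
    using supp by (auto simp: set_pmf_eq)
  moreover have "indicator {v i} x = (0::real)" "indicator {- v i} x = (0::real)" if "i \<in> {1..n}" for i
    using False that by (auto simp: indicator_def)
  ultimately show ?thesis
    by simp
qed

lemma cross_weightsE:
  fixes \<mu> :: "'a::euclidean_space pmf"
  assumes "cross_weights \<mu>"
  obtains B where "orthonormal B" "span B = UNIV" "set_pmf \<mu> \<subseteq> B \<union> uminus ` B"
    and "\<And>b. b \<in> B \<Longrightarrow> axis_mass \<mu> b = 1 / DIM('a)"
proof -
  obtain v a b where v: "orthonormal_basis_seq DIM('a) v"
    and ab: "\<forall>i\<in>{1..DIM('a)}. a i \<ge> 0 \<and> b i \<ge> 0 \<and> a i + b i = 1 / DIM('a)"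
    and p: "\<And>x. pmf \<mu> x = (\<Sum>i=1..DIM('a). a i * indicator {v i} x + b i * indicator {- v i} x)"
    using assms unfolding cross_weights_def by blast
  let ?B = "v ` {1..DIM('a)}"
  have "set_pmf \<mu> \<subseteq> ?B \<union> uminus ` ?B"
  proof
    fix x assume "x \<in> set_pmf \<mu>"
    then have "(\<Sum>i=1..DIM('a). a i * indicator {v i} x + b i * indicator {- v i} x) \<noteq> 0"
      by (simp add: set_pmf_iff p)
    then obtain i where i: "i \<in> {1..DIM('a)}" "a i * indicator {v i} x + b i * indicator {- v i} x \<noteq> 0"
      by (meson sum.not_neutral_contains_not_neutral)
    then have "x = v i \<or> x = - v i"
      by (cases "x = v i"; cases "x = - v i") auto
    then show "x \<in> ?B \<union> uminus ` ?B"
      using i(1) by blast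
  qed
  moreover have "axis_mass \<mu> (v k) = 1 / DIM('a)" if "k \<in> {1..DIM('a)}" for k
    using ab that sum_signed_basis_indicator[OF v that, of a b] by (simp add: axis_mass_def p)
  ultimately show thesis
    using v by (intro that[of ?B]) (auto simp: orthonormal_basis_seq_iff)
qed

lemma cross_weightsI:
  fixes \<mu> :: "'a::euclidean_space pmf"
  assumes B: "orthonormal B" "span B = UNIV" "set_pmf \<mu> \<subseteq> B \<union> uminus ` B"
    and mass: "\<And>b. b \<in> B \<Longrightarrow> axis_mass \<mu> b = 1 / DIM('a)"
  shows "cross_weights \<mu>"
proof -
  obtain v where v: "orthonormal_basis_seq DIM('a) v" and vB: "v ` {1..DIM('a)} = B"
    using ex_orthonormal_basis_seq[OF B(1,2)] .
  show ?thesis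
    unfolding cross_weights_def
  proof (intro exI conjI)
    show "orthonormal_basis_seq DIM('a) v"
      by (rule v)
    show "\<forall>i\<in>{1..DIM('a)}. pmf \<mu> (v i) \<ge> 0 \<and> pmf \<mu> (- v i) \<ge> 0 \<and>
        pmf \<mu> (v i) + pmf \<mu> (- v i) = 1 / DIM('a)"
      using mass vB by (auto simp: axis_mass_def)
    show "\<forall>x. pmf \<mu> x = (\<Sum>i=1..DIM('a). pmf \<mu> (v i) * indicator {v i} x + pmf \<mu> (- v i) * indicator {- v i} x)"
      using pmf_eq_sum_signed_basis[OF v] B(3) vB by blast
  qed
qed

lemma ex_cross_weights: "\<exists>\<mu>::'a::euclidean_space pmf. cross_weights \<mu>"
proof -
  let ?\<mu> = "pmf_of_set (Basis :: 'a set)"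
  have "axis_mass ?\<mu> b = 1 / DIM('a)" if "b \<in> Basis" for b
    using that orthonormal_uminus_notin[OF orthonormal_Basis that] by (simp add: axis_mass_def)
  then have "cross_weights ?\<mu>"
    by (intro cross_weightsI[OF orthonormal_Basis span_Basis]) auto
  then show ?thesis ..
qed

lemma cross_weights_energy:
  fixes \<mu> :: "'a::euclidean_space pmf"
  assumes "cross_weights \<mu>"
  shows "\<mu> \<in> P_fin" and "0 < \<alpha> \<Longrightarrow> energy \<alpha> \<mu> = 1/2 * (1 - 1 / DIM('a))"
proof -
  obtain B where B: "orthonormal B" "span B = UNIV" "set_pmf \<mu> \<subseteq> B \<union> uminus ` B"
    and mass: "\<And>b. b \<in> B \<Longrightarrow> axis_mass \<mu> b = 1 / DIM('a)"
    using cross_weightsE[OF assms] by blast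
  show "\<mu> \<in> P_fin"
    using B(3) orthonormal_finite[OF B(1)] orthonormal_signed_subset_sphere[OF B(1)]
    by (auto simp: P_fin_def intro: finite_subset)
  have "(\<Sum>b\<in>B. (axis_mass \<mu> b)\<^sup>2) = card B * (1 / DIM('a))\<^sup>2"
    using mass by simp
  also have "\<dots> = 1 / DIM('a)"
    by (simp add: orthonormal_card_eq_DIM[OF B(1,2)] power2_eq_square)
  finally show "0 < \<alpha> \<Longrightarrow> energy \<alpha> \<mu> = 1/2 * (1 - 1 / DIM('a))"
    using energy_signed_basis[OF B(1,3)] by simp
qed

lemma cross_weights_if_energy:
  fixes \<mu> :: "'a::euclidean_space pmf"
  assumes "\<mu> \<in> P_fin" "orthogonal_up_to_sign (set_pmf \<mu>)"
    and energy: "energy 1 \<mu> = 1/2 * (1 - 1 / DIM('a))"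
  shows "cross_weights \<mu>"
proof -
  obtain B where B: "orthonormal B" "span B = UNIV" "set_pmf \<mu> \<subseteq> B \<union> uminus ` B"
    using signed_basis_if_orthogonal_up_to_sign[OF _ assms(2)] assms(1) by (auto simp: P_fin_def)
  have card: "card B = DIM('a)" and fin: "finite B" and ne: "B \<noteq> {}"
    using orthonormal_card_eq_DIM[OF B(1,2)] orthonormal_finite[OF B(1)] by auto
  have "(\<Sum>b\<in>B. (axis_mass \<mu> b)\<^sup>2) = 1 / DIM('a)"
    using energy energy_signed_basis[OF B(1,3), of 1] by simp
  then have "(\<Sum>b\<in>B. (axis_mass \<mu> b)\<^sup>2) = (\<Sum>b\<in>B. axis_mass \<mu> b)\<^sup>2 / card B"
    using sum_axis_mass[OF B(1,3)] card by simp
  then have "\<forall>b\<in>B. axis_mass \<mu> b = (\<Sum>b\<in>B. axis_mass \<mu> b) / card B"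
    using sum_power2_eq_iff_constant[OF fin ne] by blast
  then have "\<forall>b\<in>B. axis_mass \<mu> b = 1 / DIM('a)"
    using sum_axis_mass[OF B(1,3)] card by simp
  then show ?thesis
    using cross_weightsI[OF B] by blast
qed

lemma cross_weights_maximizers_iff:
  "(\<forall>\<mu>::'a::euclidean_space pmf. cross_weights \<mu> \<longrightarrow> maximizes 1 P_fin \<mu>)
    \<longleftrightarrow> (\<forall>\<alpha>::real>1. \<forall>\<mu>::'a pmf. maximizes \<alpha> P_fin \<mu> \<longleftrightarrow> cross_weights \<mu>)"
proof (rule maximizes_1_iff_maximizes_gt_1)
  show "\<exists>\<mu>::'a pmf. cross_weights \<mu>"
    by (rule ex_cross_weights)
  show "\<mu> \<in> P_fin" if "cross_weights \<mu>" for \<mu> :: "'a pmf"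
    by (rule cross_weights_energy(1)[OF that])
  show "energy \<alpha> \<mu> = 1/2 * (1 - 1 / DIM('a))" if "cross_weights \<mu>" "1 \<le> \<alpha>" for \<mu> :: "'a pmf" and \<alpha> :: real
    using cross_weights_energy(2)[OF that(1)] that(2) by simp
  show "cross_weights \<mu>"
    if "\<mu> \<in> P_fin" "orthogonal_up_to_sign (set_pmf \<mu>)" "energy 1 \<mu> = 1/2 * (1 - 1 / DIM('a))"
    for \<mu> :: "'a pmf"
    by (rule cross_weights_if_energy[OF that])
qed simp

section \<open>Equal-weight configurations\<close>

(* The index in {1..n} of the residue class of i modulo n; index n stands for residue 0,
   matching the indexing of the basis in cross_config. *)
definition residue_index :: "nat \<Rightarrow> nat \<Rightarrow> nat" where
  "residue_index n i = (i - 1) mod n + 1"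

lemma residue_index_mem: "0 < n \<Longrightarrow> residue_index n i \<in> {1..n}"
  by (simp add: residue_index_def Suc_leI)

lemma residue_index_eq_iff:
  assumes "1 \<le> i" "j \<in> {1..n}"
  shows "residue_index n i = j \<longleftrightarrow> i mod n = j mod n"
proof -
  obtain a b where "i = Suc a" "j = Suc b" "b < n"
    using assms by (cases i; cases j) auto
  then show ?thesis
    by (auto simp: residue_index_def mod_Suc)
qed

definition residue_count :: "nat \<Rightarrow> nat \<Rightarrow> nat \<Rightarrow> nat" where
  "residue_count n N j = card {i\<in>{1..N}. i mod n = j mod n}"

lemma residue_count_eq:
  assumes "j \<in> {1..n}"
  shows "residue_count n N j = N div n + (if j \<le> N mod n then 1 else 0)"
proof (induction N)
  case 0
  then show ?case
    using assms by (simp add: residue_count_def)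
next
  case (Suc N)
  have "{i\<in>{1..Suc N}. i mod n = j mod n}
      = {i\<in>{1..N}. i mod n = j mod n} \<union> (if Suc N mod n = j mod n then {Suc N} else {})"
    by (auto simp: le_Suc_eq)
  then have step: "residue_count n (Suc N) j = residue_count n N j + (if Suc N mod n = j mod n then 1 else 0)"
    by (simp add: residue_count_def)
  have jmod: "j mod n = (if j = n then 0 else j)"
    using assms by auto
  show ?case
  proof (cases "Suc (N mod n) = n")
    case True
    then have "Suc N mod n = 0" "Suc N div n = Suc (N div n)"
      by (simp_all add: mod_Suc div_Suc)
    then show ?thesis
      using Suc.IH step True jmod assms by auto
  next
    case False
    then have "Suc N mod n = Suc (N mod n)" "Suc N div n = N div n"
      by (simp_all add: mod_Suc div_Suc)
    then show ?thesis
      using Suc.IH step False jmod assms by auto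
  qed
qed

lemma residue_count_two_valued:
  "j \<in> {1..n} \<Longrightarrow> residue_count n N j = N div n \<or> residue_count n N j = N div n + 1"
  by (simp add: residue_count_eq)

lemma sum_residue_count:
  assumes "0 < n"
  shows "(\<Sum>j=1..n. residue_count n N j) = N"
proof -
  have "(\<Sum>j=1..n. residue_count n N j) = (\<Sum>j=1..n. N div n + (if j \<le> N mod n then 1 else 0))"
    by (intro sum.cong) (simp_all add: residue_count_eq)
  also have "\<dots> = n * (N div n) + card {j\<in>{1..n}. j \<le> N mod n}"
    using sum.inter_filter[of "{1..n}" "\<lambda>_. 1::nat" "\<lambda>j. j \<le> N mod n"] by (simp add: sum.distrib)
  also have "{j\<in>{1..n}. j \<le> N mod n} = {1..N mod n}"
    using mod_less_divisor[OF assms, of N] by auto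
  finally show ?thesis
    by simp
qed

lemma set_pmf_empirical:
  fixes N :: nat
  assumes "1 \<le> N"
  shows "set_pmf (map_pmf x (pmf_of_set {1..N})) = x ` {1..N}"
proof -
  have "1 \<in> {1..N}"
    using assms by simp
  then have "{1..N} \<noteq> {}"
    by blast
  then show ?thesis
    by (simp add: set_pmf_of_set)
qed

lemma P_eq_subset_P_fin: "1 \<le> N \<Longrightarrow> P_eq N \<subseteq> P_fin"
  by (auto simp: P_eq_def P_fin_def set_pmf_empirical)

lemma map_pmf_of_set_comp_bij:
  assumes "bij_betw \<sigma> A A" "finite A" "A \<noteq> {}"
  shows "map_pmf (x \<circ> \<sigma>) (pmf_of_set A) = map_pmf x (pmf_of_set A)"
proof -
  have "map_pmf \<sigma> (pmf_of_set A) = pmf_of_set A"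
    using assms map_pmf_of_set_inj[of \<sigma> A] by (simp add: bij_betw_def)
  then show ?thesis
    by (simp add: pmf.map_comp[symmetric])
qed

lemma axis_mass_empirical:
  fixes x :: "nat \<Rightarrow> 'a::real_vector" and N :: nat
  assumes "1 \<le> N" "b \<noteq> 0"
  shows "axis_mass (map_pmf x (pmf_of_set {1..N})) b = card {i\<in>{1..N}. x i \<in> {b, - b}} / N"
proof -
  let ?\<mu> = "map_pmf x (pmf_of_set {1..N})"
  have "b \<noteq> - b"
    using assms(2) minus_eq_self_iff[of b] by metis
  then have "axis_mass ?\<mu> b = measure_pmf.prob ?\<mu> {b, - b}"
    by (subst measure_measure_pmf_finite) (simp_all add: axis_mass_def)
  also have "\<dots> = card ({1..N} \<inter> x -` {b, - b}) / N"
    using assms(1) by (simp add: measure_map_pmf measure_pmf_of_set)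
  also have "{1..N} \<inter> x -` {b, - b} = {i\<in>{1..N}. x i \<in> {b, - b}}"
    by blast
  finally show ?thesis .
qed

lemma energy_empirical_signed_basis:
  fixes x :: "nat \<Rightarrow> 'a::euclidean_space" and N :: nat
  assumes "1 \<le> N" "orthonormal B" "x ` {1..N} \<subseteq> B \<union> uminus ` B" "0 < \<alpha>"
  shows "energy \<alpha> (map_pmf x (pmf_of_set {1..N}))
    = 1/2 * (1 - real (\<Sum>b\<in>B. (card {i\<in>{1..N}. x i \<in> {b, - b}})\<^sup>2) / (real N)\<^sup>2)"
proof -
  have "axis_mass (map_pmf x (pmf_of_set {1..N})) b = card {i\<in>{1..N}. x i \<in> {b, - b}} / N"
    if "b \<in> B" for b
    using assms(1,2) that by (intro axis_mass_empirical) (auto simp: orthonormal_def)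
  then have "energy \<alpha> (map_pmf x (pmf_of_set {1..N}))
      = 1/2 * (1 - (\<Sum>b\<in>B. (card {i\<in>{1..N}. x i \<in> {b, - b}} / N)\<^sup>2))"
    using energy_signed_basis[OF assms(2) _ assms(4), of "map_pmf x (pmf_of_set {1..N})"] assms(1,3)
    by (simp add: set_pmf_empirical)
  then show ?thesis
    by (simp add: power_divide sum_divide_distrib)
qed

lemma sum_axis_count:
  fixes x :: "nat \<Rightarrow> 'a::euclidean_space" and N :: nat
  assumes "1 \<le> N" "orthonormal B" "x ` {1..N} \<subseteq> B \<union> uminus ` B"
  shows "(\<Sum>b\<in>B. card {i\<in>{1..N}. x i \<in> {b, - b}}) = N"
proof -
  have "axis_mass (map_pmf x (pmf_of_set {1..N})) b = card {i\<in>{1..N}. x i \<in> {b, - b}} / N"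
    if "b \<in> B" for b
    using assms(1,2) that by (intro axis_mass_empirical) (auto simp: orthonormal_def)
  then have "(\<Sum>b\<in>B. card {i\<in>{1..N}. x i \<in> {b, - b}} / N) = 1"
    using sum_axis_mass[OF assms(2), of "map_pmf x (pmf_of_set {1..N})"] assms(1,3)
    by (simp add: set_pmf_empirical)
  then have "real (\<Sum>b\<in>B. card {i\<in>{1..N}. x i \<in> {b, - b}}) = real N"
    using assms(1) by (simp add: sum_divide_distrib[symmetric])
  then show ?thesis
    by (simp only: of_nat_eq_iff)
qed

lemma cross_config_iff:
  fixes \<mu> :: "'a::euclidean_space pmf"
  shows "cross_config N \<mu> \<longleftrightarrow>
    (\<exists>v x. orthonormal_basis_seq DIM('a) v \<and> (\<forall>i\<in>{1..N}. x i \<in> sphere 0 1) \<and>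
      \<mu> = map_pmf x (pmf_of_set {1..N}) \<and>
      (\<forall>i\<in>{1..N}. x i \<in> {v (residue_index DIM('a) i), - v (residue_index DIM('a) i)}))"
proof -
  have "(\<forall>j\<in>{1..DIM('a)}. i mod DIM('a) = j mod DIM('a) \<longrightarrow> y \<in> {v j, - v j})
      \<longleftrightarrow> y \<in> {v (residue_index DIM('a) i), - v (residue_index DIM('a) i)}"
    if "i \<in> {1..N}" for i and y :: 'a and v :: "nat \<Rightarrow> 'a"
  proof -
    let ?r = "residue_index DIM('a) i"
    have r: "?r \<in> {1..DIM('a)}"
      by (rule residue_index_mem[OF DIM_positive])
    have "j = ?r \<longleftrightarrow> i mod DIM('a) = j mod DIM('a)" if "j \<in> {1..DIM('a)}" for j
      using residue_index_eq_iff[of i j] that \<open>i \<in> {1..N}\<close> by auto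
    then show ?thesis
      using r by blast
  qed
  then show ?thesis
    unfolding cross_config_def by (intro ex_cong1 conj_cong refl ball_cong) auto
qed

lemma ex_cross_config: "\<exists>\<mu>::'a::euclidean_space pmf. cross_config N \<mu>"
proof -
  obtain v :: "nat \<Rightarrow> 'a" where v: "orthonormal_basis_seq DIM('a) v" "v ` {1..DIM('a)} = Basis"
    using ex_orthonormal_basis_seq[OF orthonormal_Basis span_Basis] .
  define x where "x i = v (residue_index DIM('a) i)" for i
  have "x i \<in> Basis" for i
  proof -
    have "residue_index DIM('a) i \<in> {1..DIM('a)}"
      by (rule residue_index_mem[OF DIM_positive])
    then show ?thesis
      using v(2) by (auto simp: x_def)
  qed
  then have "cross_config N (map_pmf x (pmf_of_set {1..N}))"
    unfolding cross_config_iff using v(1) by (intro exI[of _ v] exI[of _ x]) (auto simp: x_def)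
  then show ?thesis ..
qed

lemma axis_count_cross_pattern:
  fixes v :: "nat \<Rightarrow> 'a::euclidean_space"
  assumes v: "orthonormal_basis_seq DIM('a) v"
    and pattern: "\<forall>i\<in>{1..N}. x i \<in> {v (residue_index DIM('a) i), - v (residue_index DIM('a) i)}"
    and j: "j \<in> {1..DIM('a)}"
  shows "card {i\<in>{1..N}. x i \<in> {v j, - v j}} = residue_count DIM('a) N j"
proof -
  have "x i \<in> {v j, - v j} \<longleftrightarrow> i mod DIM('a) = j mod DIM('a)" if i: "i \<in> {1..N}" for i
  proof -
    let ?r = "residue_index DIM('a) i"
    have r: "?r \<in> {1..DIM('a)}"
      by (rule residue_index_mem[OF DIM_positive])
    have "x i \<in> {v j, - v j} \<longleftrightarrow> ?r = j"
    proof
      assume xj: "x i \<in> {v j, - v j}"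
      have "x i \<in> {v ?r, - v ?r}"
        using pattern i by blast
      with xj have "v ?r \<in> {v j, - v j}"
        by (auto simp: minus_equation_iff)
      then show "?r = j"
        by (rule orthonormal_basis_seq_axis_eq[OF v r j])
    qed (use pattern i in auto)
    then show ?thesis
      using residue_index_eq_iff[of i j] i j by auto
  qed
  then have "{i\<in>{1..N}. x i \<in> {v j, - v j}} = {i\<in>{1..N}. i mod DIM('a) = j mod DIM('a)}"
    by blast
  then show ?thesis
    by (simp add: residue_count_def)
qed

definition cross_energy :: "nat \<Rightarrow> nat \<Rightarrow> real" where
  "cross_energy n N = 1/2 * (1 - real (\<Sum>j=1..n. (residue_count n N j)\<^sup>2) / (real N)\<^sup>2)"

lemma cross_config_energy:
  fixes \<mu> :: "'a::euclidean_space pmf" and N :: nat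
  assumes N: "1 \<le> N" and cross: "cross_config N \<mu>"
  shows "\<mu> \<in> P_eq N" and "0 < \<alpha> \<Longrightarrow> energy \<alpha> \<mu> = cross_energy DIM('a) N"
proof -
  obtain v x where v: "orthonormal_basis_seq DIM('a) v" and sph: "\<forall>i\<in>{1..N}. x i \<in> sphere 0 1"
    and \<mu>: "\<mu> = map_pmf x (pmf_of_set {1..N})"
    and pattern: "\<forall>i\<in>{1..N}. x i \<in> {v (residue_index DIM('a) i), - v (residue_index DIM('a) i)}"
    using cross by (auto simp: cross_config_iff)
  show "\<mu> \<in> P_eq N"
    using sph \<mu> by (auto simp: P_eq_def)
  let ?B = "v ` {1..DIM('a)}"
  have inj: "inj_on v {1..DIM('a)}" and on: "orthonormal ?B"
    using v by (simp_all add: orthonormal_basis_seq_iff)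
  have "x ` {1..N} \<subseteq> ?B \<union> uminus ` ?B"
    using pattern residue_index_mem[OF DIM_positive] by blast
  moreover assume "0 < \<alpha>"
  ultimately have "energy \<alpha> \<mu>
      = 1/2 * (1 - real (\<Sum>b\<in>?B. (card {i\<in>{1..N}. x i \<in> {b, - b}})\<^sup>2) / (real N)\<^sup>2)"
    unfolding \<mu> by (rule energy_empirical_signed_basis[OF N on])
  also have "(\<Sum>b\<in>?B. (card {i\<in>{1..N}. x i \<in> {b, - b}})\<^sup>2)
      = (\<Sum>j=1..DIM('a). (card {i\<in>{1..N}. x i \<in> {v j, - v j}})\<^sup>2)"
    by (rule sum.reindex[OF inj, unfolded comp_def])
  also have "\<dots> = (\<Sum>j=1..DIM('a). (residue_count DIM('a) N j)\<^sup>2)"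
    using axis_count_cross_pattern[OF v pattern] by simp
  finally show "energy \<alpha> \<mu> = cross_energy DIM('a) N"
    by (simp add: cross_energy_def)
qed

definition antipodal_pair :: "'a::real_vector \<Rightarrow> 'a set" where
  "antipodal_pair y = {y, - y}"

lemma antipodal_pair_eq_iff: "antipodal_pair y = antipodal_pair b \<longleftrightarrow> y \<in> {b, - b}"
  by (auto simp: antipodal_pair_def doubleton_eq_iff)

lemma card_antipodal_pair_fibers:
  fixes w :: "nat \<Rightarrow> 'a::euclidean_space" and N :: nat
  assumes w: "orthonormal_basis_seq DIM('a) w"
    and x: "x ` {1..N} \<subseteq> w ` {1..DIM('a)} \<union> uminus ` w ` {1..DIM('a)}"
    and counts: "\<And>j. j \<in> {1..DIM('a)} \<Longrightarrow> card {i\<in>{1..N}. x i \<in> {w j, - w j}} = residue_count DIM('a) N j"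
  shows "card {i\<in>{1..N}. antipodal_pair (w (residue_index DIM('a) i)) = K}
    = card {i\<in>{1..N}. antipodal_pair (x i) = K}"
proof -
  let ?r = "residue_index DIM('a)"
  have r: "?r i \<in> {1..DIM('a)}" for i
    by (rule residue_index_mem[OF DIM_positive])
  show ?thesis
  proof (cases "\<exists>j\<in>{1..DIM('a)}. K = antipodal_pair (w j)")
    case True
    then obtain j where j: "j \<in> {1..DIM('a)}" "K = antipodal_pair (w j)"
      by blast
    have "antipodal_pair (w (?r i)) = K \<longleftrightarrow> i mod DIM('a) = j mod DIM('a)" if "i \<in> {1..N}" for i
      using j orthonormal_basis_seq_axis_eq[OF w r j(1)] residue_index_eq_iff[of i j] that
      by (auto simp: antipodal_pair_eq_iff)
    then have "{i\<in>{1..N}. antipodal_pair (w (?r i)) = K} = {i\<in>{1..N}. i mod DIM('a) = j mod DIM('a)}"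
      by blast
    moreover have "{i\<in>{1..N}. antipodal_pair (x i) = K} = {i\<in>{1..N}. x i \<in> {w j, - w j}}"
      using j(2) antipodal_pair_eq_iff by blast
    ultimately show ?thesis
      using counts[OF j(1)] by (simp add: residue_count_def)
  next
    case False
    have "antipodal_pair (w (?r i)) \<noteq> K" "antipodal_pair (x i) \<noteq> K" if "i \<in> {1..N}" for i
    proof -
      show "antipodal_pair (w (?r i)) \<noteq> K"
        using False r by blast
      have "x i \<in> w ` {1..DIM('a)} \<union> uminus ` w ` {1..DIM('a)}"
        using x that by blast
      then obtain j where j: "j \<in> {1..DIM('a)}" "x i \<in> {w j, - w j}"
        by auto
      then have "antipodal_pair (x i) = antipodal_pair (w j)"
        by (simp only: antipodal_pair_eq_iff)
      then show "antipodal_pair (x i) \<noteq> K"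
        using False j(1) by blast
    qed
    then have "{i\<in>{1..N}. antipodal_pair (w (?r i)) = K} = {}" "{i\<in>{1..N}. antipodal_pair (x i) = K} = {}"
      by auto
    then show ?thesis
      by (metis card.empty)
  qed
qed

lemma cross_config_if_axis_counts:
  fixes w :: "nat \<Rightarrow> 'a::euclidean_space" and N :: nat
  assumes N: "1 \<le> N" and w: "orthonormal_basis_seq DIM('a) w"
    and x: "x ` {1..N} \<subseteq> w ` {1..DIM('a)} \<union> uminus ` w ` {1..DIM('a)}"
    and counts: "\<And>j. j \<in> {1..DIM('a)} \<Longrightarrow> card {i\<in>{1..N}. x i \<in> {w j, - w j}} = residue_count DIM('a) N j"
  shows "cross_config N (map_pmf x (pmf_of_set {1..N}))"
proof -
  let ?r = "residue_index DIM('a)"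
  \<comment> \<open>Reordering the points does not change the empirical measure, and a suitable
    reordering puts every point on the axis of its residue class.\<close>
  obtain \<sigma> where \<sigma>: "bij_betw \<sigma> {1..N} {1..N}"
    and \<sigma>_pair: "\<And>i. i \<in> {1..N} \<Longrightarrow> antipodal_pair (x (\<sigma> i)) = antipodal_pair (w (?r i))"
    using ex_bij_betw_fibers[OF finite_atLeastAtMost finite_atLeastAtMost
        card_antipodal_pair_fibers[OF w x counts]]
    by blast
  have pattern: "(x \<circ> \<sigma>) i \<in> {w (?r i), - w (?r i)}" if "i \<in> {1..N}" for i
    using \<sigma>_pair[OF that] by (simp add: antipodal_pair_eq_iff)
  have "(x \<circ> \<sigma>) i \<in> sphere 0 1" if "i \<in> {1..N}" for i
    using pattern[OF that] residue_index_mem[OF DIM_positive, of i] w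
    by (auto simp: orthonormal_basis_seq_iff orthonormal_def)
  moreover have "map_pmf (x \<circ> \<sigma>) (pmf_of_set {1..N}) = map_pmf x (pmf_of_set {1..N})"
    using \<sigma> N by (intro map_pmf_of_set_comp_bij) auto
  ultimately show ?thesis
    unfolding cross_config_iff using w pattern by (intro exI[of _ w] exI[of _ "x \<circ> \<sigma>"]) auto
qed

lemma cross_config_if_energy:
  fixes \<mu> :: "'a::euclidean_space pmf" and N :: nat
  assumes N: "1 \<le> N" and \<mu>: "\<mu> \<in> P_eq N" and orth: "orthogonal_up_to_sign (set_pmf \<mu>)"
    and energy: "energy 1 \<mu> = cross_energy DIM('a) N"
  shows "cross_config N \<mu>"
proof -
  let ?I = "{1..DIM('a)}" and ?cnt = "residue_count DIM('a) N" and ?q = "N div DIM('a)"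
  obtain x where \<mu>_eq: "\<mu> = map_pmf x (pmf_of_set {1..N})" and sph: "\<forall>i\<in>{1..N}. x i \<in> sphere 0 1"
    using \<mu> by (auto simp: P_eq_def)
  have "set_pmf \<mu> \<subseteq> sphere 0 1"
    using sph N by (auto simp: \<mu>_eq set_pmf_empirical)
  then obtain B where B: "orthonormal B" "span B = UNIV" and supp: "set_pmf \<mu> \<subseteq> B \<union> uminus ` B"
    using signed_basis_if_orthogonal_up_to_sign orth by blast
  have x_B: "x ` {1..N} \<subseteq> B \<union> uminus ` B"
    using supp N by (simp add: \<mu>_eq set_pmf_empirical)
  have card_B: "card B = DIM('a)" and fin_B: "finite B"
    using orthonormal_card_eq_DIM[OF B] orthonormal_finite[OF B(1)] by auto
  define c where "c b = card {i\<in>{1..N}. x i \<in> {b, - b}}" for b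
  have sum_c: "sum c B = sum ?cnt ?I"
    using sum_axis_count[OF N B(1) x_B] sum_residue_count[of "DIM('a)" N] by (simp add: c_def)
  have "energy 1 \<mu> = 1/2 * (1 - real (\<Sum>b\<in>B. (c b)\<^sup>2) / (real N)\<^sup>2)"
    using energy_empirical_signed_basis[OF N B(1) x_B, of 1] by (simp add: \<mu>_eq c_def)
  then have sq_c: "(\<Sum>b\<in>B. (c b)\<^sup>2) = (\<Sum>j\<in>?I. (?cnt j)\<^sup>2)"
    using energy N unfolding cross_energy_def by (simp del: of_nat_sum of_nat_power)
  have cnt_two: "\<forall>j\<in>?I. ?cnt j = ?q \<or> ?cnt j = ?q + 1"
    using residue_count_two_valued by blast
  have "\<forall>b\<in>B. c b = ?q \<or> c b = ?q + 1"
    using two_valued_if_sum_power2_eq[OF fin_B _ _ sum_c sq_c cnt_two] card_B by simp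
  then obtain w where w: "bij_betw w ?I B" and c_w: "\<And>j. j \<in> ?I \<Longrightarrow> c (w j) = ?cnt j"
    using ex_bij_betw_two_valued[OF _ fin_B _ sum_c[symmetric] cnt_two] card_B by auto
  have w_basis: "orthonormal_basis_seq DIM('a) w"
    using orthonormal_basis_seqI[OF B w] .
  have "x ` {1..N} \<subseteq> w ` ?I \<union> uminus ` w ` ?I"
    using x_B w by (simp add: bij_betw_def)
  then show ?thesis
    unfolding \<mu>_eq by (rule cross_config_if_axis_counts[OF N w_basis]) (use c_w in \<open>simp add: c_def\<close>)
qed

lemma cross_config_maximizers_iff:
  "(\<forall>N::nat\<ge>1. \<forall>\<mu>::'a::euclidean_space pmf. cross_config N \<mu> \<longrightarrow> maximizes 1 (P_eq N) \<mu>)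
    \<longleftrightarrow> (\<forall>\<alpha>::real>1. \<forall>N::nat\<ge>1. \<forall>\<mu>::'a pmf. maximizes \<alpha> (P_eq N) \<mu> \<longleftrightarrow> cross_config N \<mu>)"
proof -
  have "(\<forall>\<mu>::'a pmf. cross_config N \<mu> \<longrightarrow> maximizes 1 (P_eq N) \<mu>)
      \<longleftrightarrow> (\<forall>\<alpha>>1. \<forall>\<mu>::'a pmf. maximizes \<alpha> (P_eq N) \<mu> \<longleftrightarrow> cross_config N \<mu>)"
    if N: "1 \<le> N" for N :: nat
  proof (rule maximizes_1_iff_maximizes_gt_1)
    show "P_eq N \<subseteq> P_fin"
      by (rule P_eq_subset_P_fin[OF N])
    show "\<exists>\<mu>::'a pmf. cross_config N \<mu>"
      by (rule ex_cross_config)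
    show "\<mu> \<in> P_eq N" if "cross_config N \<mu>" for \<mu> :: "'a pmf"
      by (rule cross_config_energy(1)[OF N that])
    show "energy \<alpha> \<mu> = cross_energy DIM('a) N" if "cross_config N \<mu>" "1 \<le> \<alpha>" for \<mu> :: "'a pmf" and \<alpha> :: real
      using cross_config_energy(2)[OF N that(1)] that(2) by simp
    show "cross_config N \<mu>"
      if "\<mu> \<in> P_eq N" "orthogonal_up_to_sign (set_pmf \<mu>)" "energy 1 \<mu> = cross_energy DIM('a) N"
      for \<mu> :: "'a pmf"
      by (rule cross_config_if_energy[OF N that])
  qed
  then show ?thesis
    by blast
qed

theorem proposition1p3:
  shows "((\<forall>N::nat\<ge>1. \<forall>\<mu>::(real^'n) pmf. cross_config N \<mu> \<longrightarrow> maximizes 1 (P_eq N) \<mu>)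
          \<longleftrightarrow> (\<forall>\<alpha>::real>1. \<forall>N::nat\<ge>1. \<forall>\<mu>::(real^'n) pmf.
                 maximizes \<alpha> (P_eq N) \<mu> \<longleftrightarrow> cross_config N \<mu>))
       \<and> ((\<forall>\<mu>::(real^'n) pmf. cross_weights \<mu> \<longrightarrow> maximizes 1 P_fin \<mu>)
          \<longleftrightarrow> (\<forall>\<alpha>::real>1. \<forall>\<mu>::(real^'n) pmf. maximizes \<alpha> P_fin \<mu> \<longleftrightarrow> cross_weights \<mu>))"
  using cross_config_maximizers_iff cross_weights_maximizers_iff by blast

end
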